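(* Let $f\in C(I)$, the partition $\Delta$ and the sequence of base functions $b=\{b_r\}$ (with $b_r\in C(I)$, $b_r(x_0)=f(x_0)$, $b_r(x_N)=f(x_N)$, $\sup_r\|b_r\|_\infty<\infty$) be fixed, and fix $s\in[0,1)$. Let $B$ be the set of sequences $\alpha=\{\alpha_r\}_{r\in\mathbb{N}}$, $\alpha_r=(\alpha_{1,r},\dots,\alpha_{N,r})$, with $\alpha_{i,r}\in Lip_d(I)$ and $\|\alpha\|_\infty\le s$, equipped with the metric $\|\alpha-\beta\|_\infty=\sup_r\max_i\|\alpha_{i,r}-\beta_{i,r}\|_\infty$. Then the map $\mathcal{B}:B\to C(I)$, $\mathcal{B}(\alpha)=f^\alpha_{\Delta,b}$, is continuous (with respect to the supremum norm on $C(I)$).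
   Context: $I=[x_0,x_N]$ with partition $\Delta: x_0<x_1<\dots<x_N$, $I_i=[x_{i-1},x_i]$, $l_i:I\to I_i$ the affine bijection $l_i(x)=\frac{x_i-x_{i-1}}{x_N-x_0}x+\frac{x_Nx_{i-1}-x_0x_i}{x_N-x_0}$, $Q_i=l_i^{-1}$. $Lip_d(I)$ ($0<d\le1$): real functions $g$ on $I$ with $\sup_{x\ne y}|g(x)-g(y)|/|x-y|^d<\infty$. $\|\alpha\|_\infty:=\sup_r\max_i\|\alpha_{i,r}\|_\infty$. For $\alpha\in B$, $f^\alpha_{\Delta,b}$ (the non-stationary $\alpha$-fractal function) is the uniform limit, independent of $g\in C_f(I)=\{g\in C(I):g(x_0)=f(x_0),g(x_N)=f(x_N)\}$, of $T^{\alpha_1}\circ\cdots\circ T^{\alpha_r}g$, where $(T^{\alpha_r}g)(x)=f(x)+\alpha_{i,r}(Q_i(x))(g-b_r)(Q_i(x))$ for $x\in I_i$. *)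

theory Defs
  imports "HOL-Analysis.Analysis"
begin

definition Iint :: "(nat \<Rightarrow> real) \<Rightarrow> nat \<Rightarrow> real set" where
  "Iint x N = {x 0 .. x N}"

text \<open>Q_i = inverse of the affine bijection l_i : I -> I_i.\<close>
definition Qmap :: "(nat \<Rightarrow> real) \<Rightarrow> nat \<Rightarrow> nat \<Rightarrow> real \<Rightarrow> real" where
  "Qmap x N i y = x 0 + (y - x (i - 1)) * (x N - x 0) / (x i - x (i - 1))"

text \<open>Index of the subinterval I_i = [x (i-1), x i] containing t (leftmost one at nodes).\<close>
definition sub_index :: "(nat \<Rightarrow> real) \<Rightarrow> nat \<Rightarrow> real \<Rightarrow> nat" where
  "sub_index x N t = (LEAST i. 1 \<le> i \<and> t \<le> x i)"

text \<open>alpha r i : the scaling function alpha_{i,r}; b r : base function b_r.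
  (T^{alpha_r} g)(t) = f(t) + alpha_{i,r}(Q_i t) * (g - b_r)(Q_i t) for t in I_i.\<close>
definition Top ::
  "(real \<Rightarrow> real) \<Rightarrow> (nat \<Rightarrow> real) \<Rightarrow> nat \<Rightarrow> (nat \<Rightarrow> real \<Rightarrow> real)
    \<Rightarrow> (nat \<Rightarrow> nat \<Rightarrow> real \<Rightarrow> real) \<Rightarrow> nat \<Rightarrow> (real \<Rightarrow> real) \<Rightarrow> real \<Rightarrow> real" where
  "Top f x N b alpha r g t =
     (let i = sub_index x N t; q = Qmap x N i t
      in f t + alpha r i q * (g q - b r q))"

fun Tcomp ::
  "(real \<Rightarrow> real) \<Rightarrow> (nat \<Rightarrow> real) \<Rightarrow> nat \<Rightarrow> (nat \<Rightarrow> real \<Rightarrow> real)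
    \<Rightarrow> (nat \<Rightarrow> nat \<Rightarrow> real \<Rightarrow> real) \<Rightarrow> nat \<Rightarrow> nat \<Rightarrow> (real \<Rightarrow> real) \<Rightarrow> real \<Rightarrow> real" where
  "Tcomp f x N b alpha n 0 g = g"
| "Tcomp f x N b alpha n (Suc m) g = Top f x N b alpha n (Tcomp f x N b alpha (Suc n) m g)"

definition Cf :: "(real \<Rightarrow> real) \<Rightarrow> (nat \<Rightarrow> real) \<Rightarrow> nat \<Rightarrow> (real \<Rightarrow> real) set" where
  "Cf f x N = {g. continuous_on (Iint x N) g \<and> g (x 0) = f (x 0) \<and> g (x N) = f (x N)}"

definition fractal ::
  "(real \<Rightarrow> real) \<Rightarrow> (nat \<Rightarrow> real) \<Rightarrow> nat \<Rightarrow> (nat \<Rightarrow> real \<Rightarrow> real)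
    \<Rightarrow> (nat \<Rightarrow> nat \<Rightarrow> real \<Rightarrow> real) \<Rightarrow> real \<Rightarrow> real" where
  "fractal f x N b alpha = (THE phi.
      (\<forall>g\<in>Cf f x N. uniform_limit (Iint x N) (\<lambda>r. Tcomp f x N b alpha 1 r g) phi sequentially)
      \<and> (\<forall>t. t \<notin> Iint x N \<longrightarrow> phi t = 0))"

definition lip_d :: "real \<Rightarrow> real set \<Rightarrow> (real \<Rightarrow> real) \<Rightarrow> bool" where
  "lip_d d S g = (\<exists>L. \<forall>u\<in>S. \<forall>v\<in>S. \<bar>g u - g v\<bar> \<le> L * \<bar>u - v\<bar> powr d)"

definition Bset :: "(nat \<Rightarrow> real) \<Rightarrow> nat \<Rightarrow> real \<Rightarrow> real \<Rightarrow> (nat \<Rightarrow> nat \<Rightarrow> real \<Rightarrow> real) set" where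
  "Bset x N d s = {alpha. (\<forall>r\<ge>1. \<forall>i\<in>{1..N}. lip_d d (Iint x N) (alpha r i))
      \<and> (\<forall>r\<ge>1. \<forall>i\<in>{1..N}. \<forall>t\<in>Iint x N. \<bar>alpha r i t\<bar> \<le> s)}"

end

theory Submission
  imports Defs
begin

(* As |alpha_{i,r}| <= s < 1, each T^{alpha_r} is an s-contraction for the sup norm on I and maps
   the ball of radius (|f| + s |b|) / (1 - s) into itself. Hence the iterates
   T^{alpha_1} o ... o T^{alpha_m} g are uniformly Cauchy and their limit does not depend on g:
   it is f^alpha. Running the iterates for alpha and beta side by side from g = f, every step adds
   an error of at most |alpha - beta| (C + |b|), C a bound for all iterates, and shrinks the error
   accumulated so far by the factor s; so |f^alpha - f^beta| <= |alpha - beta| (C + |b|) / (1 - s).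
   Neither the Hoelder regularity of alpha nor the continuity or endpoint values of b are needed. *)

lemma uniform_limit_geometric_null:
  fixes g :: "nat \<Rightarrow> 'a \<Rightarrow> real"
  assumes "\<And>m t. t \<in> S \<Longrightarrow> \<bar>g m t\<bar> \<le> s ^ m * D" and "0 \<le> s" "s < 1"
  shows "uniform_limit S g (\<lambda>_. 0) sequentially"
proof (rule uniform_limit_null_comparison)
  show "\<forall>\<^sub>F m in sequentially. \<forall>t\<in>S. norm (g m t) \<le> s ^ m * D"
    using assms(1) by simp
  have "(\<lambda>m. s ^ m * D) \<longlonglongrightarrow> 0"
    using assms(2,3) by (simp add: LIMSEQ_power_zero tendsto_mult_left_zero)
  then show "uniform_limit S (\<lambda>m t. s ^ m * D) (\<lambda>_. 0) sequentially"
    by (simp add: uniform_limit_iff tendsto_iff)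
qed

lemma continuous_on_Iint_bounded:
  fixes g :: "real \<Rightarrow> real"
  assumes "continuous_on (Iint x N) g"
  obtains B where "\<And>t. t \<in> Iint x N \<Longrightarrow> \<bar>g t\<bar> \<le> B"
proof -
  have "compact (g ` Iint x N)"
    using assms by (intro compact_continuous_image) (simp_all add: Iint_def)
  then have "bounded (g ` Iint x N)"
    by (rule compact_imp_bounded)
  then obtain B where "\<forall>y\<in>g ` Iint x N. norm y \<le> B"
    unfolding bounded_iff by blast
  then show ?thesis
    using that by auto
qed

(* Without some g in C_f(I) the defining property would not determine phi on I. *)
lemma fractal_eqI:
  assumes "g \<in> Cf f x N"
    and lim: "\<forall>g\<in>Cf f x N. uniform_limit (Iint x N) (\<lambda>r. Tcomp f x N b alpha 1 r g) phi sequentially"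
    and outside: "\<forall>t. t \<notin> Iint x N \<longrightarrow> phi t = 0"
  shows "fractal f x N b alpha = phi"
  unfolding fractal_def
proof (rule the_equality)
  show "(\<forall>g\<in>Cf f x N. uniform_limit (Iint x N) (\<lambda>r. Tcomp f x N b alpha 1 r g) phi sequentially)
    \<and> (\<forall>t. t \<notin> Iint x N \<longrightarrow> phi t = 0)"
    using lim outside by blast
  fix psi
  assume psi: "(\<forall>g\<in>Cf f x N. uniform_limit (Iint x N) (\<lambda>r. Tcomp f x N b alpha 1 r g) psi sequentially)
    \<and> (\<forall>t. t \<notin> Iint x N \<longrightarrow> psi t = 0)"
  show "psi = phi"
  proof
    fix t
    show "psi t = phi t"
    proof (cases "t \<in> Iint x N")
      case True
      have "uniform_limit (Iint x N) (\<lambda>r. Tcomp f x N b alpha 1 r g) psi sequentially"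
        using psi \<open>g \<in> Cf f x N\<close> by blast
      moreover have "uniform_limit (Iint x N) (\<lambda>r. Tcomp f x N b alpha 1 r g) phi sequentially"
        using lim \<open>g \<in> Cf f x N\<close> by blast
      ultimately show ?thesis
        using LIMSEQ_unique tendsto_uniform_limitI True by metis
    qed (use psi outside in simp)
  qed
qed

definition bounded_scalings :: "(nat \<Rightarrow> real) \<Rightarrow> nat \<Rightarrow> real \<Rightarrow> (nat \<Rightarrow> nat \<Rightarrow> real \<Rightarrow> real) set" where
  "bounded_scalings x N s = {alpha. \<forall>r\<ge>1. \<forall>i\<in>{1..N}. \<forall>t\<in>Iint x N. \<bar>alpha r i t\<bar> \<le> s}"

lemma Bset_subset_bounded_scalings: "Bset x N d s \<subseteq> bounded_scalings x N s"
  by (auto simp: Bset_def bounded_scalings_def)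

locale interval_partition =
  fixes x :: "nat \<Rightarrow> real" and N :: nat
  assumes N_ge_1: "N \<ge> 1"
    and x_less_Suc: "\<And>i. i < N \<Longrightarrow> x i < x (Suc i)"
begin

lemma x_mono: "i \<le> j \<Longrightarrow> j \<le> N \<Longrightarrow> x i \<le> x j"
proof (induction j rule: dec_induct)
  case (step j)
  then show ?case using x_less_Suc[of j] by simp
qed simp

lemma x_0_less_x_N: "x 0 < x N"
  using x_mono[of 0 "N - 1"] x_less_Suc[of "N - 1"] N_ge_1 by simp

lemma x_0_in_Iint: "x 0 \<in> Iint x N"
  using x_0_less_x_N by (simp add: Iint_def)

lemma sub_index_bounds:
  assumes t: "t \<in> Iint x N"
  defines "i \<equiv> sub_index x N t"
  shows "1 \<le> i" "i \<le> N" "x (i - 1) \<le> t" "t \<le> x i"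
proof -
  have N: "1 \<le> N \<and> t \<le> x N" using N_ge_1 t by (simp add: Iint_def)
  show "1 \<le> i" "t \<le> x i"
    unfolding i_def sub_index_def using LeastI[of "\<lambda>i. 1 \<le> i \<and> t \<le> x i", OF N] by simp_all
  show "i \<le> N"
    unfolding i_def sub_index_def using N by (rule Least_le)
  show "x (i - 1) \<le> t"
  proof (cases "i = 1")
    case True
    then show ?thesis using t by (simp add: Iint_def)
  next
    case False
    with \<open>1 \<le> i\<close> have "i - 1 < i" "1 \<le> i - 1" by auto
    then have "\<not> (1 \<le> i - 1 \<and> t \<le> x (i - 1))"
      using not_less_Least[of "i - 1" "\<lambda>i. 1 \<le> i \<and> t \<le> x i"] unfolding i_def sub_index_def by blast
    with \<open>1 \<le> i - 1\<close> show ?thesis by simp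
  qed
qed

lemma Qmap_in_Iint:
  assumes t: "t \<in> Iint x N"
  shows "Qmap x N (sub_index x N t) t \<in> Iint x N"
proof -
  define i where "i = sub_index x N t"
  note i = sub_index_bounds[OF t, folded i_def]
  define \<tau> where "\<tau> = (t - x (i - 1)) / (x i - x (i - 1))"
  have "x (i - 1) < x i" using x_less_Suc[of "i - 1"] i by simp
  then have "0 \<le> \<tau>" "\<tau> \<le> 1" using i by (auto simp: \<tau>_def divide_le_eq)
  moreover have "Qmap x N i t = x 0 + \<tau> * (x N - x 0)"
    by (simp add: Qmap_def \<tau>_def)
  moreover have "0 \<le> \<tau> * (x N - x 0)" "\<tau> * (x N - x 0) \<le> x N - x 0"
    using x_0_less_x_N \<open>0 \<le> \<tau>\<close> \<open>\<tau> \<le> 1\<close> by (simp_all add: mult_left_le_one_le)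
  ultimately have "x 0 \<le> Qmap x N i t" "Qmap x N i t \<le> x N"
    by linarith+
  then show ?thesis by (simp add: Iint_def i_def)
qed

end

locale fractal_operator = interval_partition x N
  for x :: "nat \<Rightarrow> real" and N :: nat +
  fixes f :: "real \<Rightarrow> real" and b :: "nat \<Rightarrow> real \<Rightarrow> real" and s F M :: real
  assumes f_cont: "continuous_on (Iint x N) f"
    and f_bound: "\<And>t. t \<in> Iint x N \<Longrightarrow> \<bar>f t\<bar> \<le> F"
    and b_bound: "\<And>r t. t \<in> Iint x N \<Longrightarrow> \<bar>b r t\<bar> \<le> M"
    and s_nonneg: "0 \<le> s" and s_less_1: "s < 1"
begin

lemma F_nonneg: "0 \<le> F"
  using f_bound[OF x_0_in_Iint] by linarith

lemma M_nonneg: "0 \<le> M"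
  using b_bound[OF x_0_in_Iint, of 0] by linarith

lemma Top_local_form:
  assumes "t \<in> Iint x N"
  shows "\<exists>i\<in>{1..N}. \<exists>q\<in>Iint x N.
    \<forall>alpha r g. Top f x N b alpha r g t = f t + alpha r i q * (g q - b r q)"
  using sub_index_bounds[OF assms] Qmap_in_Iint[OF assms] by (auto simp: Top_def Let_def)

lemma scaling_bound:
  "alpha \<in> bounded_scalings x N s \<Longrightarrow> r \<ge> 1 \<Longrightarrow> i \<in> {1..N} \<Longrightarrow> q \<in> Iint x N
    \<Longrightarrow> \<bar>alpha r i q\<bar> \<le> s"
  by (simp add: bounded_scalings_def)

lemma abs_Top_le:
  assumes alpha: "alpha \<in> bounded_scalings x N s" and r: "r \<ge> 1" and t: "t \<in> Iint x N"
    and g: "\<And>q. q \<in> Iint x N \<Longrightarrow> \<bar>g q\<bar> \<le> C"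
  shows "\<bar>Top f x N b alpha r g t\<bar> \<le> F + s * (C + M)"
proof -
  obtain i q where iq: "i \<in> {1..N}" "q \<in> Iint x N"
    and Top: "Top f x N b alpha r g t = f t + alpha r i q * (g q - b r q)"
    using Top_local_form[OF t] by blast
  have "\<bar>g q - b r q\<bar> \<le> C + M" using g[OF iq(2)] b_bound[OF iq(2), of r] by linarith
  then have "\<bar>alpha r i q * (g q - b r q)\<bar> \<le> s * (C + M)"
    unfolding abs_mult using scaling_bound[OF alpha r iq] by (intro mult_mono) auto
  then show ?thesis using Top f_bound[OF t] by linarith
qed

lemma abs_Top_diff_le:
  assumes alpha: "alpha \<in> bounded_scalings x N s" and r: "r \<ge> 1" and t: "t \<in> Iint x N"
    and gh: "\<And>q. q \<in> Iint x N \<Longrightarrow> \<bar>g q - h q\<bar> \<le> D"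
  shows "\<bar>Top f x N b alpha r g t - Top f x N b alpha r h t\<bar> \<le> s * D"
proof -
  obtain i q where iq: "i \<in> {1..N}" "q \<in> Iint x N"
    and Top: "\<And>g. Top f x N b alpha r g t = f t + alpha r i q * (g q - b r q)"
    using Top_local_form[OF t] by blast
  have "\<bar>alpha r i q * (g q - h q)\<bar> \<le> s * D"
    unfolding abs_mult using scaling_bound[OF alpha r iq] gh[OF iq(2)] by (intro mult_mono) auto
  then show ?thesis by (simp add: Top algebra_simps)
qed

lemma abs_Top_diff_scalings_le:
  assumes beta: "beta \<in> bounded_scalings x N s" and r: "r \<ge> 1" and t: "t \<in> Iint x N"
    and close: "\<And>i q. i \<in> {1..N} \<Longrightarrow> q \<in> Iint x N \<Longrightarrow> \<bar>alpha r i q - beta r i q\<bar> \<le> \<delta>"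
    and g: "\<And>q. q \<in> Iint x N \<Longrightarrow> \<bar>g q\<bar> \<le> C"
    and gh: "\<And>q. q \<in> Iint x N \<Longrightarrow> \<bar>g q - h q\<bar> \<le> D"
  shows "\<bar>Top f x N b alpha r g t - Top f x N b beta r h t\<bar> \<le> \<delta> * (C + M) + s * D"
proof -
  obtain i q where iq: "i \<in> {1..N}" "q \<in> Iint x N"
    and Top: "\<And>alpha g. Top f x N b alpha r g t = f t + alpha r i q * (g q - b r q)"
    using Top_local_form[OF t] by blast
  have "\<bar>g q - b r q\<bar> \<le> C + M" using g[OF iq(2)] b_bound[OF iq(2), of r] by linarith
  then have scaling_error: "\<bar>(alpha r i q - beta r i q) * (g q - b r q)\<bar> \<le> \<delta> * (C + M)"
    unfolding abs_mult using close[OF iq] by (intro mult_mono) auto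
  have propagated_error: "\<bar>beta r i q * (g q - h q)\<bar> \<le> s * D"
    unfolding abs_mult using scaling_bound[OF beta r iq] gh[OF iq(2)] by (intro mult_mono) auto
  have "Top f x N b alpha r g t - Top f x N b beta r h t
      = (alpha r i q - beta r i q) * (g q - b r q) + beta r i q * (g q - h q)"
    by (simp add: Top algebra_simps)
  then show ?thesis using scaling_error propagated_error by (smt (verit) abs_triangle_ineq)
qed

definition invariant_radius :: real where
  "invariant_radius = (F + s * M) / (1 - s)"

lemma invariant_radius_nonneg: "0 \<le> invariant_radius"
  using s_nonneg s_less_1 F_nonneg M_nonneg by (simp add: invariant_radius_def)

lemma invariant_radius_le: "invariant_radius \<le> C \<Longrightarrow> F + s * (C + M) \<le> C"
  using s_less_1 by (simp add: invariant_radius_def field_simps)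

lemma abs_Tcomp_le:
  assumes alpha: "alpha \<in> bounded_scalings x N s" and C: "invariant_radius \<le> C"
    and g: "\<And>q. q \<in> Iint x N \<Longrightarrow> \<bar>g q\<bar> \<le> C"
  shows "n \<ge> 1 \<Longrightarrow> t \<in> Iint x N \<Longrightarrow> \<bar>Tcomp f x N b alpha n m g t\<bar> \<le> C"
proof (induction m arbitrary: n t)
  case (Suc m)
  have "\<bar>Tcomp f x N b alpha n (Suc m) g t\<bar> \<le> F + s * (C + M)"
    unfolding Tcomp.simps by (rule abs_Top_le[OF alpha Suc.prems]) (use Suc.IH in simp)
  then show ?case using invariant_radius_le[OF C] by linarith
qed (use g in simp)

lemma abs_Tcomp_diff_le:
  assumes alpha: "alpha \<in> bounded_scalings x N s"
    and gh: "\<And>q. q \<in> Iint x N \<Longrightarrow> \<bar>g q - h q\<bar> \<le> D"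
  shows "n \<ge> 1 \<Longrightarrow> t \<in> Iint x N \<Longrightarrow>
    \<bar>Tcomp f x N b alpha n m g t - Tcomp f x N b alpha n m h t\<bar> \<le> s ^ m * D"
proof (induction m arbitrary: n t)
  case (Suc m)
  have "\<bar>Tcomp f x N b alpha n (Suc m) g t - Tcomp f x N b alpha n (Suc m) h t\<bar> \<le> s * (s ^ m * D)"
    unfolding Tcomp.simps by (rule abs_Top_diff_le[OF alpha Suc.prems]) (use Suc.IH in simp)
  then show ?case by simp
qed (use gh in simp)

lemma Tcomp_add:
  "Tcomp f x N b alpha n (m + k) g = Tcomp f x N b alpha n m (Tcomp f x N b alpha (n + m) k g)"
  by (induction m arbitrary: n) auto

lemma abs_Tcomp_diff_scalings_le:
  assumes alpha: "alpha \<in> bounded_scalings x N s" and beta: "beta \<in> bounded_scalings x N s"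
    and close: "\<And>r i q. r \<ge> 1 \<Longrightarrow> i \<in> {1..N} \<Longrightarrow> q \<in> Iint x N \<Longrightarrow> \<bar>alpha r i q - beta r i q\<bar> \<le> \<delta>"
    and \<delta>: "0 \<le> \<delta>" and C: "invariant_radius \<le> C"
    and g: "\<And>q. q \<in> Iint x N \<Longrightarrow> \<bar>g q\<bar> \<le> C"
  shows "n \<ge> 1 \<Longrightarrow> t \<in> Iint x N \<Longrightarrow>
    \<bar>Tcomp f x N b alpha n m g t - Tcomp f x N b beta n m g t\<bar> \<le> \<delta> * (C + M) / (1 - s)"
proof (induction m arbitrary: n t)
  case 0
  have "0 \<le> C" using C invariant_radius_nonneg by linarith
  then show ?case using \<delta> s_less_1 M_nonneg by simp
next
  case (Suc m)
  have "\<bar>Tcomp f x N b alpha n (Suc m) g t - Tcomp f x N b beta n (Suc m) g t\<bar>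
      \<le> \<delta> * (C + M) + s * (\<delta> * (C + M) / (1 - s))"
    unfolding Tcomp.simps
  proof (rule abs_Top_diff_scalings_le[OF beta Suc.prems])
    show "\<And>q. q \<in> Iint x N \<Longrightarrow> \<bar>Tcomp f x N b alpha (Suc n) m g q\<bar> \<le> C"
      by (rule abs_Tcomp_le[OF alpha C]) (use g in auto)
  qed (use close Suc in auto)
  also have "\<dots> = \<delta> * (C + M) / (1 - s)"
    using s_less_1 by (simp add: field_simps)
  finally show ?case .
qed

lemma uniformly_convergent_Tcomp:
  assumes alpha: "alpha \<in> bounded_scalings x N s" and C: "invariant_radius \<le> C"
    and g: "\<And>q. q \<in> Iint x N \<Longrightarrow> \<bar>g q\<bar> \<le> C"
  shows "uniformly_convergent_on (Iint x N) (\<lambda>m. Tcomp f x N b alpha 1 m g)"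
proof (intro Cauchy_uniformly_convergent uniformly_Cauchy_onI')
  fix e :: real
  assume "e > 0"
  have "(\<lambda>m. s ^ m * (2 * C)) \<longlonglongrightarrow> 0"
    using s_nonneg s_less_1 by (simp add: LIMSEQ_power_zero tendsto_mult_left_zero)
  then obtain M0 where M0: "\<And>m. m \<ge> M0 \<Longrightarrow> s ^ m * (2 * C) < e"
    using \<open>e > 0\<close> by (force simp: lim_sequentially dist_real_def)
  show "\<exists>M0. \<forall>t\<in>Iint x N. \<forall>m\<ge>M0. \<forall>n>m.
      dist (Tcomp f x N b alpha 1 m g t) (Tcomp f x N b alpha 1 n g t) < e"
  proof (intro exI[of _ M0] ballI allI impI)
    fix t m n
    assume t: "t \<in> Iint x N" and "M0 \<le> m" "m < n"
    have tail: "Tcomp f x N b alpha 1 n g = Tcomp f x N b alpha 1 m (Tcomp f x N b alpha (1 + m) (n - m) g)"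
      using Tcomp_add[of alpha 1 m "n - m" g] \<open>m < n\<close> by simp
    have "\<bar>Tcomp f x N b alpha 1 m g t - Tcomp f x N b alpha 1 n g t\<bar> \<le> s ^ m * (2 * C)"
      unfolding tail
    proof (rule abs_Tcomp_diff_le[OF alpha _ _ t])
      fix q
      assume q: "q \<in> Iint x N"
      have "\<bar>Tcomp f x N b alpha (1 + m) (n - m) g q\<bar> \<le> C"
        by (rule abs_Tcomp_le[OF alpha C]) (use g q in auto)
      then show "\<bar>g q - Tcomp f x N b alpha (1 + m) (n - m) g q\<bar> \<le> 2 * C"
        using g[OF q] by linarith
    qed simp
    then show "dist (Tcomp f x N b alpha 1 m g t) (Tcomp f x N b alpha 1 n g t) < e"
      using M0[OF \<open>M0 \<le> m\<close>] by (simp add: dist_real_def)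
  qed
qed

lemma uniform_limit_Tcomp_start_indep:
  assumes alpha: "alpha \<in> bounded_scalings x N s"
    and gh: "\<And>q. q \<in> Iint x N \<Longrightarrow> \<bar>g q - h q\<bar> \<le> D"
    and lim: "uniform_limit (Iint x N) (\<lambda>m. Tcomp f x N b alpha 1 m g) l sequentially"
  shows "uniform_limit (Iint x N) (\<lambda>m. Tcomp f x N b alpha 1 m h) l sequentially"
proof -
  have "uniform_limit (Iint x N) (\<lambda>m t. Tcomp f x N b alpha 1 m h t - Tcomp f x N b alpha 1 m g t)
      (\<lambda>_. 0) sequentially"
  proof (rule uniform_limit_geometric_null[OF _ s_nonneg s_less_1])
    show "\<bar>Tcomp f x N b alpha 1 m h t - Tcomp f x N b alpha 1 m g t\<bar> \<le> s ^ m * D"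
      if "t \<in> Iint x N" for m t
      using abs_Tcomp_diff_le[OF alpha _ _ that, where n = 1 and m = m] gh by (simp add: abs_minus_commute)
  qed
  from uniform_limit_add[OF lim this] show ?thesis by simp
qed

lemma uniform_limit_fractal:
  assumes alpha: "alpha \<in> bounded_scalings x N s"
  shows "uniform_limit (Iint x N) (\<lambda>m. Tcomp f x N b alpha 1 m f) (fractal f x N b alpha) sequentially"
proof -
  define C where "C = max F invariant_radius"
  have f_le_C: "\<bar>f q\<bar> \<le> C" if "q \<in> Iint x N" for q
    using f_bound[OF that] by (simp add: C_def le_max_iff_disj)
  have "uniformly_convergent_on (Iint x N) (\<lambda>m. Tcomp f x N b alpha 1 m f)"
    by (rule uniformly_convergent_Tcomp[OF alpha, where C = C]) (simp add: C_def, simp add: f_le_C)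
  then obtain l where l: "uniform_limit (Iint x N) (\<lambda>m. Tcomp f x N b alpha 1 m f) l sequentially"
    unfolding uniformly_convergent_on_def by blast
  define phi where "phi t = (if t \<in> Iint x N then l t else 0)" for t
  have phi: "uniform_limit (Iint x N) (\<lambda>m. Tcomp f x N b alpha 1 m g) phi sequentially"
    if g: "g \<in> Cf f x N" for g
  proof -
    obtain B where B: "\<And>q. q \<in> Iint x N \<Longrightarrow> \<bar>g q\<bar> \<le> B"
      using continuous_on_Iint_bounded g unfolding Cf_def by blast
    have "uniform_limit (Iint x N) (\<lambda>m. Tcomp f x N b alpha 1 m g) l sequentially"
    proof (rule uniform_limit_Tcomp_start_indep[OF alpha _ l, where D = "C + B"])
      show "\<bar>f q - g q\<bar> \<le> C + B" if "q \<in> Iint x N" for q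
        using f_le_C[OF that] B[OF that] by linarith
    qed
    then show ?thesis
      by (subst uniform_limit_cong'[where i = l]) (simp_all add: phi_def)
  qed
  have "f \<in> Cf f x N" using f_cont by (simp add: Cf_def)
  moreover have "fractal f x N b alpha = phi"
    using phi by (intro fractal_eqI[OF \<open>f \<in> Cf f x N\<close>]) (simp_all add: phi_def)
  ultimately show ?thesis using phi by simp
qed

definition fractal_lipschitz_const :: real where
  "fractal_lipschitz_const = (max F invariant_radius + M) / (1 - s)"

lemma fractal_lipschitz_const_nonneg: "0 \<le> fractal_lipschitz_const"
  using F_nonneg M_nonneg s_less_1 by (simp add: fractal_lipschitz_const_def)

lemma abs_fractal_diff_le:
  assumes alpha: "alpha \<in> bounded_scalings x N s" and beta: "beta \<in> bounded_scalings x N s"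
    and close: "\<And>r i q. r \<ge> 1 \<Longrightarrow> i \<in> {1..N} \<Longrightarrow> q \<in> Iint x N \<Longrightarrow> \<bar>alpha r i q - beta r i q\<bar> \<le> \<delta>"
    and \<delta>: "0 \<le> \<delta>" and t: "t \<in> Iint x N"
  shows "\<bar>fractal f x N b alpha t - fractal f x N b beta t\<bar> \<le> \<delta> * fractal_lipschitz_const"
proof (rule LIMSEQ_le_const2)
  show "(\<lambda>m. \<bar>Tcomp f x N b alpha 1 m f t - Tcomp f x N b beta 1 m f t\<bar>)
      \<longlonglongrightarrow> \<bar>fractal f x N b alpha t - fractal f x N b beta t\<bar>"
    by (intro tendsto_rabs tendsto_diff tendsto_uniform_limitI[OF _ t]
        uniform_limit_fractal alpha beta)
  have "\<bar>Tcomp f x N b alpha 1 m f t - Tcomp f x N b beta 1 m f t\<bar>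
      \<le> \<delta> * (max F invariant_radius + M) / (1 - s)" for m
    by (rule abs_Tcomp_diff_scalings_le[OF alpha beta])
      (use close \<delta> t f_bound in \<open>auto simp: le_max_iff_disj\<close>)
  then show "\<exists>M0. \<forall>m\<ge>M0. \<bar>Tcomp f x N b alpha 1 m f t - Tcomp f x N b beta 1 m f t\<bar>
      \<le> \<delta> * fractal_lipschitz_const"
    by (simp add: fractal_lipschitz_const_def)
qed

lemma fractal_uniformly_continuous:
  assumes A: "A \<subseteq> bounded_scalings x N s" and "\<epsilon> > 0"
  shows "\<exists>\<delta>>0. \<forall>alpha\<in>A. \<forall>beta\<in>A.
    (\<forall>r\<ge>1. \<forall>i\<in>{1..N}. \<forall>t\<in>Iint x N. \<bar>alpha r i t - beta r i t\<bar> \<le> \<delta>) \<longrightarrow>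
    (\<forall>t\<in>Iint x N. \<bar>fractal f x N b alpha t - fractal f x N b beta t\<bar> \<le> \<epsilon>)"
proof (intro exI[of _ "\<epsilon> / (fractal_lipschitz_const + 1)"] conjI ballI impI)
  let ?L = fractal_lipschitz_const
  have L: "0 \<le> ?L" by (rule fractal_lipschitz_const_nonneg)
  then show "\<epsilon> / (?L + 1) > 0" using \<open>\<epsilon> > 0\<close> by simp
  fix alpha beta t
  assume "alpha \<in> A" "beta \<in> A"
    and close: "\<forall>r\<ge>1. \<forall>i\<in>{1..N}. \<forall>t\<in>Iint x N. \<bar>alpha r i t - beta r i t\<bar> \<le> \<epsilon> / (?L + 1)"
    and t: "t \<in> Iint x N"
  then have "alpha \<in> bounded_scalings x N s" "beta \<in> bounded_scalings x N s"
    using A by blast+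
  then have "\<bar>fractal f x N b alpha t - fractal f x N b beta t\<bar> \<le> \<epsilon> / (?L + 1) * ?L"
    by (rule abs_fractal_diff_le[OF _ _ _ _ t]) (use close L \<open>\<epsilon> > 0\<close> in simp_all)
  also have "\<dots> \<le> \<epsilon>"
    using L \<open>\<epsilon> > 0\<close> by (simp add: pos_divide_le_eq)
  finally show "\<bar>fractal f x N b alpha t - fractal f x N b beta t\<bar> \<le> \<epsilon>" .
qed

end

theorem mainTheorem11:
  fixes f :: "real \<Rightarrow> real" and x :: "nat \<Rightarrow> real" and N :: nat
    and b :: "nat \<Rightarrow> real \<Rightarrow> real" and s d :: real
  assumes N: "N \<ge> 1"
    and part: "\<And>i. i < N \<Longrightarrow> x i < x (Suc i)"
    and fcont: "continuous_on (Iint x N) f"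
    and bcont: "\<And>r. continuous_on (Iint x N) (b r)"
    and b0: "\<And>r. b r (x 0) = f (x 0)"
    and bN: "\<And>r. b r (x N) = f (x N)"
    and bbdd: "\<exists>M. \<forall>r. \<forall>t\<in>Iint x N. \<bar>b r t\<bar> \<le> M"
    and s: "0 \<le> s" "s < 1"
    and d: "0 < d" "d \<le> 1"
  shows "\<forall>alpha\<in>Bset x N d s. \<forall>\<epsilon>>0. \<exists>\<delta>>0. \<forall>beta\<in>Bset x N d s.
           (\<forall>r\<ge>1. \<forall>i\<in>{1..N}. \<forall>t\<in>Iint x N. \<bar>alpha r i t - beta r i t\<bar> \<le> \<delta>) \<longrightarrow>
           (\<forall>t\<in>Iint x N. \<bar>fractal f x N b alpha t - fractal f x N b beta t\<bar> \<le> \<epsilon>)"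
proof (intro ballI allI impI)
  fix alpha and \<epsilon> :: real
  assume "alpha \<in> Bset x N d s" "\<epsilon> > 0"
  obtain F where F: "\<And>t. t \<in> Iint x N \<Longrightarrow> \<bar>f t\<bar> \<le> F"
    using continuous_on_Iint_bounded[OF fcont] by blast
  obtain M where M: "\<And>r t. t \<in> Iint x N \<Longrightarrow> \<bar>b r t\<bar> \<le> M"
    using bbdd by blast
  interpret fractal_operator x N f b s F M
    by unfold_locales (use N part fcont F M s in auto)
  show "\<exists>\<delta>>0. \<forall>beta\<in>Bset x N d s.
      (\<forall>r\<ge>1. \<forall>i\<in>{1..N}. \<forall>t\<in>Iint x N. \<bar>alpha r i t - beta r i t\<bar> \<le> \<delta>) \<longrightarrow>
      (\<forall>t\<in>Iint x N. \<bar>fractal f x N b alpha t - fractal f x N b beta t\<bar> \<le> \<epsilon>)"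
    using fractal_uniformly_continuous[OF Bset_subset_bounded_scalings \<open>\<epsilon> > 0\<close>]
      \<open>alpha \<in> Bset x N d s\<close> by blast
qed

end
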